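(* Let $n\ge2$, $1\le r\le n-1$ and $\alpha,\beta,\gamma\in\mathbb{Z}_2^n$. Then (1) $\mathrm{adp}^{\mathrm{XR}}_r(\alpha,\beta\to\gamma)=\mathrm{adp}^{\mathrm{XR}}_r(\beta,\alpha\to\gamma)$; (2) $\mathrm{adp}^{\mathrm{XR}}_r(\alpha,\beta\to\gamma)=\mathrm{adp}^{\mathrm{XR}}_r(\alpha+2^{n-1},\beta+2^{n-1}\to\gamma)$; (3) $\mathrm{adp}^{\mathrm{XR}}_r(\alpha,\beta\to\gamma)=\mathrm{adp}^{\mathrm{XR}}_r(\pm\alpha,\pm\beta\to\pm\gamma)$ for every independent choice of the signs (each $\pm x$ means either $x$ or $-x$).
   Context: For $x\in\mathbb{Z}_2^n$ write $x=(x_0,\dots,x_{n-1})$ and identify $x$ with the integer $\sum_{i=0}^{n-1}x_i2^{n-1-i}$ ($x_0$ most significant); $x+y$, $x-y$, $-x$ are computed modulo $2^n$. $\oplus$ is bitwise XOR and $x\lll r=(x_r,\dots,x_{n-1},x_0,\dots,x_{r-1})$. For $f:(\mathbb{Z}_2^n)^k\to\mathbb{Z}_2^n$, $\mathrm{adp}^f(\alpha_1,\dots,\alpha_k\to\alpha_{k+1})=2^{-kn}\#\{(x_1,\dots,x_k): f(x_1+\alpha_1,\dots,x_k+\alpha_k)=f(x_1,\dots,x_k)+\alpha_{k+1}\}$. $\mathrm{adp}^{\mathrm{XR}}_r$ denotes $\mathrm{adp}^f$ for $f(x,y)=(x\oplus y)\lll r$. *)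

theory Defs
  imports Complex_Main
begin

text \<open>Elements of Z_2^n are represented by their integer value x in {0..<2^n},
  where x = (x_0,...,x_{n-1}) with x_0 the most significant bit.\<close>

definition to_bits :: "nat \<Rightarrow> nat \<Rightarrow> nat \<Rightarrow> bool" where
  "to_bits n x i = bit x (n - 1 - i)"

definition from_bits :: "nat \<Rightarrow> (nat \<Rightarrow> bool) \<Rightarrow> nat" where
  "from_bits n v = (\<Sum>i<n. of_bool (v i) * 2 ^ (n - 1 - i))"

definition addn :: "nat \<Rightarrow> nat \<Rightarrow> nat \<Rightarrow> nat" where
  "addn n x y = (x + y) mod 2 ^ n"

definition negn :: "nat \<Rightarrow> nat \<Rightarrow> nat" where
  "negn n x = (2 ^ n - x mod 2 ^ n) mod 2 ^ n"

definition rotl :: "nat \<Rightarrow> nat \<Rightarrow> nat \<Rightarrow> nat" where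
  "rotl n r x = from_bits n (\<lambda>i. to_bits n x ((i + r) mod n))"

definition adp2 :: "nat \<Rightarrow> (nat \<Rightarrow> nat \<Rightarrow> nat) \<Rightarrow> nat \<Rightarrow> nat \<Rightarrow> nat \<Rightarrow> real" where
  "adp2 n f a b g =
     real (card {(x, y). x < 2 ^ n \<and> y < 2 ^ n \<and>
                  f (addn n x a) (addn n y b) = addn n (f x y) g}) / 2 ^ (2 * n)"

definition XR :: "nat \<Rightarrow> nat \<Rightarrow> nat \<Rightarrow> nat \<Rightarrow> nat" where
  "XR n r x y = rotl n r (xor x y)"

definition adpXR :: "nat \<Rightarrow> nat \<Rightarrow> nat \<Rightarrow> nat \<Rightarrow> nat \<Rightarrow> real" where
  "adpXR n r a b g = adp2 n (XR n r) a b g"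

definition pm :: "nat \<Rightarrow> bool \<Rightarrow> nat \<Rightarrow> nat" where
  "pm n s x = (if s then x else negn n x)"

end

theory Submission
  imports Defs
begin

text \<open>
  Write \<open>\<not>x = 2^n - 1 - x\<close> for the bitwise complement of an n-bit word; modulo \<open>2^n\<close> it
  equals \<open>-x - 1\<close>. Being bitwise, it commutes with rotation, so \<open>XR(\<not>x, y) = \<not>XR(x, y)\<close>;
  being affine, it satisfies \<open>\<not>x + a = \<not>(x - a)\<close>. Hence the involution
  \<open>(x, y) \<mapsto> (\<not>x, y)\<close> carries the solutions counted by \<open>adp(\<alpha>, \<beta> \<rightarrow> \<gamma>)\<close> onto those of
  \<open>adp(-\<alpha>, \<beta> \<rightarrow> -\<gamma>)\<close>, and the involution \<open>(x, y) \<mapsto> (\<not>(x + \<alpha>), \<not>(y + \<beta>))\<close> onto those of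
  \<open>adp(\<alpha>, \<beta> \<rightarrow> -\<gamma>)\<close>. So each sign can be flipped separately, that of \<open>\<beta>\<close> via the swap
  \<open>(x, y) \<mapsto> (y, x)\<close>, which also gives commutativity. Finally, adding \<open>2^(n-1)\<close> modulo \<open>2^n\<close>
  only flips the top bit, and two such flips cancel inside \<open>x \<oplus> y\<close>.
\<close>

definition notn :: "nat \<Rightarrow> nat \<Rightarrow> nat" where
  "notn n x = 2 ^ n - 1 - x"

lemma notn_less_exp [simp]: "notn n x < 2 ^ n"
  by (simp add: notn_def less_imp_diff_less)

lemma notn_notn [simp]: "x < 2 ^ n \<Longrightarrow> notn n (notn n x) = x"
  by (simp add: notn_def)

lemma notn_inject: "x < 2 ^ n \<Longrightarrow> y < 2 ^ n \<Longrightarrow> notn n x = notn n y \<longleftrightarrow> x = y"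
  by (auto simp: notn_def)

lemma addn_less_exp [simp]: "addn n x a < 2 ^ n"
  by (simp add: addn_def)

lemma int_addn: "int (addn n x a) = (int x + int a) mod 2 ^ n"
  by (simp add: addn_def zmod_int)

lemma int_negn: "int (negn n a) = - int a mod 2 ^ n"
proof -
  have "int (negn n a) = (2 ^ n - int a mod 2 ^ n) mod 2 ^ n"
    by (simp add: negn_def zmod_int less_imp_le)
  also have "\<dots> = - int a mod 2 ^ n"
    by (simp add: mod_simps)
  finally show ?thesis .
qed

lemma int_notn: "x < 2 ^ n \<Longrightarrow> int (notn n x) = 2 ^ n - 1 - int x"
  by (simp add: notn_def)

lemma nat_eq_if_int_mod:
  "u < 2 ^ n \<Longrightarrow> v < 2 ^ n \<Longrightarrow> int u mod 2 ^ n = int v mod 2 ^ n \<Longrightarrow> u = v"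
  by (metis mod_less of_nat_eq_iff zmod_int of_nat_numeral of_nat_power)

lemma addn_notn:
  assumes "x < 2 ^ n"
  shows "addn n (notn n x) a = notn n (addn n x (negn n a))"
proof (rule nat_eq_if_int_mod[of _ n])
  have "int (addn n (notn n x) a) = (2 ^ n - 1 - int x + int a) mod 2 ^ n"
    using assms by (simp add: int_addn int_notn)
  also have "\<dots> = (2 ^ n - 1 - (int x - int a)) mod 2 ^ n"
    by (rule arg_cong[where f = "\<lambda>t. t mod 2 ^ n"]) simp
  also have "\<dots> = int (notn n (addn n x (negn n a))) mod 2 ^ n"
    by (simp add: int_notn int_addn int_negn mod_simps)
  finally show "int (addn n (notn n x) a) mod 2 ^ n = int (notn n (addn n x (negn n a))) mod 2 ^ n"
    by simp
qed simp_all

lemma addn_addn_negn: "x < 2 ^ n \<Longrightarrow> addn n (addn n x a) (negn n a) = x"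
  by (rule nat_eq_if_int_mod) (simp_all add: int_addn int_negn mod_simps)

lemma eq_addn_iff_eq_addn_negn:
  "u < 2 ^ n \<Longrightarrow> v < 2 ^ n \<Longrightarrow> u = addn n v c \<longleftrightarrow> v = addn n u (negn n c)"
proof -
  assume "u < 2 ^ n" "v < 2 ^ n"
  then have "u = addn n v c \<longleftrightarrow> int u mod 2 ^ n = (int v + int c) mod 2 ^ n"
    and "v = addn n u (negn n c) \<longleftrightarrow> int v mod 2 ^ n = (int u - int c) mod 2 ^ n"
    by (auto intro: nat_eq_if_int_mod simp: int_addn int_negn mod_simps)
  moreover have "int v - (int u - int c) = - (int u - (int v + int c))"
    by simp
  ultimately show ?thesis
    by (simp only: mod_eq_dvd_iff dvd_minus_iff)
qed

lemma take_bit_add_exp_self: "take_bit m ((z::nat) + 2 ^ m) = take_bit m z"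
  by (simp add: take_bit_eq_mod)

lemma bit_add_exp_self: "bit ((z::nat) + 2 ^ m) m \<longleftrightarrow> \<not> bit z m"
  by (simp add: bit_iff_odd div_add_self2)

lemma addn_exp_eq_xor:
  assumes "0 < n" and "z < 2 ^ n"
  shows "addn n z (2 ^ (n - 1)) = xor z (2 ^ (n - 1))"
proof -
  obtain m where n: "n = Suc m" using assms(1) gr0_conv_Suc by blast
  have "addn n z (2 ^ m) = take_bit (Suc m) (z + 2 ^ m)"
    by (simp add: addn_def n take_bit_eq_mod)
  also have "\<dots> = take_bit (Suc m) (xor z (2 ^ m))"
    unfolding take_bit_Suc_from_most by (simp add: bit_simps take_bit_add_exp_self bit_add_exp_self)
  also have "\<dots> = xor z (2 ^ m)"
    using assms(2) by (simp add: n take_bit_nat_eq_self)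
  finally show ?thesis by (simp add: n)
qed

lemma bit_notn: "z < 2 ^ n \<Longrightarrow> bit (notn n z) k \<longleftrightarrow> k < n \<and> \<not> bit z k"
proof -
  assume z: "z < 2 ^ n"
  have "int (notn n z) = take_bit n (not (int z))"
    using z by (simp add: take_bit_not_eq_mask_diff int_notn mask_eq_exp_minus_1 take_bit_int_eq_self)
  moreover have "bit (notn n z) k \<longleftrightarrow> bit (int (notn n z)) k"
    by (simp add: bit_of_nat_iff_bit)
  ultimately show ?thesis
    by (simp add: bit_take_bit_iff bit_not_iff bit_of_nat_iff_bit)
qed

lemma xor_less_exp: "x < 2 ^ n \<Longrightarrow> y < 2 ^ n \<Longrightarrow> xor x y < (2::nat) ^ n"
  by (metis take_bit_nat_eq_self_iff take_bit_xor)

lemma bit_less_exp_imp_less: "x < 2 ^ n \<Longrightarrow> bit (x::nat) k \<Longrightarrow> k < n"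
  by (metis bit_take_bit_iff take_bit_nat_eq_self_iff)

lemma xor_notn_left: "x < 2 ^ n \<Longrightarrow> y < 2 ^ n \<Longrightarrow> xor (notn n x) y = notn n (xor x y)"
  by (rule bit_eqI) (auto simp: bit_xor_iff bit_notn xor_less_exp dest: bit_less_exp_imp_less)

lemma from_bits_cong: "(\<And>i. i < n \<Longrightarrow> v i = w i) \<Longrightarrow> from_bits n v = from_bits n w"
  unfolding from_bits_def by (rule sum.cong) simp_all

lemma from_bits_add_compl: "from_bits n v + from_bits n (\<lambda>i. \<not> v i) = 2 ^ n - 1"
proof -
  have "from_bits n v + from_bits n (\<lambda>i. \<not> v i) = (\<Sum>i<n. 2 ^ (n - Suc i))"
    unfolding from_bits_def sum.distrib[symmetric] by (rule sum.cong) auto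
  also have "\<dots> = 2 ^ n - 1"
    using sum.nat_diff_reindex[of "\<lambda>i. (2::nat) ^ i" n] by (simp add: lessThan_atLeast0 sum_power2)
  finally show ?thesis .
qed

lemma from_bits_less_exp: "from_bits n v < 2 ^ n"
proof -
  have "from_bits n v \<le> 2 ^ n - 1"
    by (metis le_add1 from_bits_add_compl)
  then show ?thesis
    by (simp add: le_diff_conv2 Suc_le_lessD)
qed

lemma rotl_notn: "z < 2 ^ n \<Longrightarrow> rotl n r (notn n z) = notn n (rotl n r z)"
proof -
  assume z: "z < 2 ^ n"
  have "rotl n r (notn n z) = from_bits n (\<lambda>i. \<not> to_bits n z ((i + r) mod n))"
    unfolding rotl_def by (rule from_bits_cong) (simp add: to_bits_def bit_notn[OF z])
  then show ?thesis
    using from_bits_add_compl[of n "\<lambda>i. to_bits n z ((i + r) mod n)"]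
    by (simp add: rotl_def notn_def)
qed

lemma card_involution_preimage:
  assumes "\<And>p. p \<in> A \<Longrightarrow> \<sigma> p \<in> A \<and> \<sigma> (\<sigma> p) = p" and "S \<subseteq> A"
  shows "card {p \<in> A. \<sigma> p \<in> S} = card S"
proof -
  have "{p \<in> A. \<sigma> p \<in> S} = \<sigma> ` S"
    using assms by (force simp: image_iff)
  moreover have "inj_on \<sigma> S"
    using assms by (metis inj_onI subsetD)
  ultimately show ?thesis
    by (simp add: card_image)
qed

definition adp_solutions :: "nat \<Rightarrow> (nat \<Rightarrow> nat \<Rightarrow> nat) \<Rightarrow> nat \<Rightarrow> nat \<Rightarrow> nat \<Rightarrow> (nat \<times> nat) set" where
  "adp_solutions n f a b g = {(x, y). x < 2 ^ n \<and> y < 2 ^ n \<and>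
     f (addn n x a) (addn n y b) = addn n (f x y) g}"

lemma adp_solutions_subset: "adp_solutions n f a b g \<subseteq> {..<2 ^ n} \<times> {..<2 ^ n}"
  by (auto simp: adp_solutions_def)

lemma adp2_eq_card: "adp2 n f a b g = card (adp_solutions n f a b g) / 2 ^ (2 * n)"
  by (simp add: adp2_def adp_solutions_def)

lemma adp2_eq_by_involution:
  assumes "\<And>x y. x < 2 ^ n \<Longrightarrow> y < 2 ^ n \<Longrightarrow>
      \<sigma> (x, y) \<in> {..<2 ^ n} \<times> {..<2 ^ n} \<and> \<sigma> (\<sigma> (x, y)) = (x, y)"
    and "\<And>x y. x < 2 ^ n \<Longrightarrow> y < 2 ^ n \<Longrightarrow>
      \<sigma> (x, y) \<in> adp_solutions n f a b g \<longleftrightarrow> (x, y) \<in> adp_solutions n f a' b' g'"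
  shows "adp2 n f a' b' g' = adp2 n f a b g"
proof -
  have "adp_solutions n f a' b' g' = {p \<in> {..<2 ^ n} \<times> {..<2 ^ n}. \<sigma> p \<in> adp_solutions n f a b g}"
    using assms(2) adp_solutions_subset by blast
  moreover have "card {p \<in> {..<2 ^ n} \<times> {..<2 ^ n}. \<sigma> p \<in> adp_solutions n f a b g}
      = card (adp_solutions n f a b g)"
    by (rule card_involution_preimage[OF _ adp_solutions_subset]) (use assms(1) in auto)
  ultimately show ?thesis
    by (simp add: adp2_eq_card)
qed

lemma adp2_commute:
  assumes "\<And>x y. f x y = f y x"
  shows "adp2 n f b a g = adp2 n f a b g"
  by (rule adp2_eq_by_involution[where \<sigma> = prod.swap]) (auto simp: adp_solutions_def assms)

lemma adp2_shift_both:
  assumes "\<And>x y. x < 2 ^ n \<Longrightarrow> y < 2 ^ n \<Longrightarrow> f (addn n x h) (addn n y h) = f x y"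
  shows "adp2 n f (addn n a h) (addn n b h) g = adp2 n f a b g"
proof -
  have "addn n x (addn n c h) = addn n (addn n x c) h" for x c
    by (simp add: addn_def mod_simps add.assoc)
  then show ?thesis
    by (simp add: adp2_def assms)
qed

lemma adp2_negn_output:
  assumes range: "\<And>x y. x < 2 ^ n \<Longrightarrow> y < 2 ^ n \<Longrightarrow> f x y < 2 ^ n"
    and compl: "\<And>x y. x < 2 ^ n \<Longrightarrow> y < 2 ^ n \<Longrightarrow> f (notn n x) (notn n y) = f x y"
  shows "adp2 n f a b (negn n g) = adp2 n f a b g"
proof -
  define \<sigma> where "\<sigma> = (\<lambda>(x, y). (notn n (addn n x a), notn n (addn n y b)))"
  show ?thesis
  proof (rule adp2_eq_by_involution[of n \<sigma>])
    fix x y :: nat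
    assume x: "x < 2 ^ n" and y: "y < 2 ^ n"
    have shift_back: "addn n (notn n (addn n x a)) a = notn n x" "addn n (notn n (addn n y b)) b = notn n y"
      using x y by (simp_all add: addn_notn addn_addn_negn)
    then show "\<sigma> (x, y) \<in> {..<2 ^ n} \<times> {..<2 ^ n} \<and> \<sigma> (\<sigma> (x, y)) = (x, y)"
      using x y by (simp add: \<sigma>_def)
    have "f (notn n x) (notn n y) = addn n (f (notn n (addn n x a)) (notn n (addn n y b))) g
      \<longleftrightarrow> f x y = addn n (f (addn n x a) (addn n y b)) g"
      using x y by (simp add: compl)
    also have "\<dots> \<longleftrightarrow> f (addn n x a) (addn n y b) = addn n (f x y) (negn n g)"
      using x y by (simp add: range eq_addn_iff_eq_addn_negn[of "f x y"])
    finally show "\<sigma> (x, y) \<in> adp_solutions n f a b g \<longleftrightarrow> (x, y) \<in> adp_solutions n f a b (negn n g)"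
      using x y by (simp add: adp_solutions_def \<sigma>_def shift_back)
  qed
qed

lemma adp2_negn_first_output:
  assumes range: "\<And>x y. x < 2 ^ n \<Longrightarrow> y < 2 ^ n \<Longrightarrow> f x y < 2 ^ n"
    and compl: "\<And>x y. x < 2 ^ n \<Longrightarrow> y < 2 ^ n \<Longrightarrow> f (notn n x) y = notn n (f x y)"
  shows "adp2 n f (negn n a) b (negn n g) = adp2 n f a b g"
  by (rule adp2_eq_by_involution[of n "\<lambda>(x, y). (notn n x, y)"])
    (simp_all add: adp_solutions_def addn_notn compl range notn_inject)

lemma XR_commute: "XR n r x y = XR n r y x"
  by (simp add: XR_def xor.commute)

lemma XR_less_exp: "XR n r x y < 2 ^ n"
  by (simp add: XR_def rotl_def from_bits_less_exp)

lemma XR_notn_left: "x < 2 ^ n \<Longrightarrow> y < 2 ^ n \<Longrightarrow> XR n r (notn n x) y = notn n (XR n r x y)"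
  by (simp add: XR_def xor_notn_left rotl_notn xor_less_exp)

lemma XR_notn_notn: "x < 2 ^ n \<Longrightarrow> y < 2 ^ n \<Longrightarrow> XR n r (notn n x) (notn n y) = XR n r x y"
  by (metis XR_commute XR_notn_left XR_less_exp notn_less_exp notn_notn)

lemma XR_shift_half:
  assumes "0 < n" and "x < 2 ^ n" and "y < 2 ^ n"
  shows "XR n r (addn n x (2 ^ (n - 1))) (addn n y (2 ^ (n - 1))) = XR n r x y"
proof -
  have "xor (xor x h) (xor y h) = xor x y" for h :: nat
    by (metis xor.assoc xor.commute xor.left_commute xor_self_eq xor.right_neutral)
  then show ?thesis
    unfolding XR_def addn_exp_eq_xor[OF assms(1,2)] addn_exp_eq_xor[OF assms(1,3)] by simp
qed

lemma adpXR_commute: "adpXR n r b a g = adpXR n r a b g"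
  unfolding adpXR_def by (rule adp2_commute) (rule XR_commute)

lemma adpXR_shift_half:
  "0 < n \<Longrightarrow> adpXR n r (addn n a (2 ^ (n - 1))) (addn n b (2 ^ (n - 1))) g = adpXR n r a b g"
  unfolding adpXR_def by (rule adp2_shift_both) (rule XR_shift_half)

lemma adpXR_negn_output: "adpXR n r a b (negn n g) = adpXR n r a b g"
  unfolding adpXR_def by (rule adp2_negn_output) (simp_all add: XR_less_exp XR_notn_notn)

lemma adpXR_negn_first: "adpXR n r (negn n a) b g = adpXR n r a b g"
proof -
  have "adpXR n r (negn n a) b g = adpXR n r (negn n a) b (negn n g)"
    by (rule adpXR_negn_output[symmetric])
  also have "\<dots> = adpXR n r a b g"
    unfolding adpXR_def by (rule adp2_negn_first_output) (simp_all add: XR_less_exp XR_notn_left)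
  finally show ?thesis .
qed

lemma adpXR_negn_second: "adpXR n r a (negn n b) g = adpXR n r a b g"
  by (metis adpXR_commute adpXR_negn_first)

lemma adpXR_pm: "adpXR n r (pm n s1 a) (pm n s2 b) (pm n s3 g) = adpXR n r a b g"
  by (simp add: pm_def adpXR_negn_first adpXR_negn_second adpXR_negn_output)

theorem theorem5:
  fixes n r \<alpha> \<beta> \<gamma> :: nat
  assumes "n \<ge> 2" and "1 \<le> r" and "r \<le> n - 1"
    and "\<alpha> < 2 ^ n" and "\<beta> < 2 ^ n" and "\<gamma> < 2 ^ n"
  shows "adpXR n r \<alpha> \<beta> \<gamma> = adpXR n r \<beta> \<alpha> \<gamma>
    \<and> adpXR n r \<alpha> \<beta> \<gamma> = adpXR n r (addn n \<alpha> (2 ^ (n - 1))) (addn n \<beta> (2 ^ (n - 1))) \<gamma>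
    \<and> (\<forall>s1 s2 s3. adpXR n r \<alpha> \<beta> \<gamma> = adpXR n r (pm n s1 \<alpha>) (pm n s2 \<beta>) (pm n s3 \<gamma>))"
proof (intro conjI allI)
  show "adpXR n r \<alpha> \<beta> \<gamma> = adpXR n r \<beta> \<alpha> \<gamma>"
    by (rule adpXR_commute[symmetric])
  show "adpXR n r \<alpha> \<beta> \<gamma> = adpXR n r (addn n \<alpha> (2 ^ (n - 1))) (addn n \<beta> (2 ^ (n - 1))) \<gamma>"
    using assms(1) by (intro adpXR_shift_half[symmetric]) simp
  fix s1 s2 s3
  show "adpXR n r \<alpha> \<beta> \<gamma> = adpXR n r (pm n s1 \<alpha>) (pm n s2 \<beta>) (pm n s3 \<gamma>)"
    by (rule adpXR_pm[symmetric])
qed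

end
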